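(* Let $Q\subseteq 2^{\mathbb{N}^k}$ be a clopen quantifier. Then for every $n$ and every $a\in\mathbb{N}^n$ the orbit $\{g(a):g\in\mathrm{Aut}(Q)\}$ is definable in $\mathscr{L}_{\omega\omega}(Q)$.
   Context: A quantifier of type $\langle k\rangle$ on $\mathbb{N}$ is a family $Q$ of subsets of $\mathbb{N}^k$, identified with a subset of $2^{\mathbb{N}^k}$ (product topology). A permutation $f$ of $\mathbb{N}$ fixes $Q$ if $A\in Q\iff f(A)\in Q$ for all $A\subseteq\mathbb{N}^k$, where $f$ acts coordinatewise on tuples and $f(A)=\{f(a):a\in A\}$; $\mathrm{Aut}(Q)$ is the group of such permutations. $\mathscr{L}_{\omega\omega}(Q)$ is first-order logic extended by formulas $Qx\,\varphi(x,y)$ ($x$ a $k$-tuple of variables) with $\mathbb{N}\models Qx\,\varphi(x,b)$ iff $\{a\in\mathbb{N}^k:\mathbb{N}\models\varphi(a,b)\}\in Q$. A set $B\subseteq\mathbb{N}^n$ is definable in $\mathscr{L}_{\omega\omega}(Q)$ if there is a formula $\varphi(x_1,\dots,x_n)$ whose only non-logical symbol is $Q$ such that $b\in B\iff\mathbb{N}\models\varphi(b)$. *)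

theory Defs
  imports Main
begin

text \<open>Tuples in N^m are represented as lists of length m.\<close>
definition tuples :: "nat \<Rightarrow> nat list set" where
  "tuples m = {xs. length xs = m}"

definition is_quantifier :: "nat \<Rightarrow> nat list set set \<Rightarrow> bool" where
  "is_quantifier k Q \<longleftrightarrow> Q \<subseteq> Pow (tuples k)"

text \<open>Open sets in the product topology of 2^(N^k) (2 discrete), written out:
  basic open neighbourhoods are given by fixing membership on a finite set of tuples.\<close>
definition open_in_cantor :: "nat \<Rightarrow> nat list set set \<Rightarrow> bool" where
  "open_in_cantor k U \<longleftrightarrow>
     (\<forall>A\<in>U. \<exists>F. finite F \<and> F \<subseteq> tuples k \<and>
        (\<forall>B. B \<subseteq> tuples k \<longrightarrow> B \<inter> F = A \<inter> F \<longrightarrow> B \<in> U))"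

definition clopen_quantifier :: "nat \<Rightarrow> nat list set set \<Rightarrow> bool" where
  "clopen_quantifier k Q \<longleftrightarrow>
     open_in_cantor k Q \<and> open_in_cantor k (Pow (tuples k) - Q)"

definition Aut :: "nat \<Rightarrow> nat list set set \<Rightarrow> (nat \<Rightarrow> nat) set" where
  "Aut k Q = {f. bij f \<and> (\<forall>A. A \<subseteq> tuples k \<longrightarrow> (A \<in> Q \<longleftrightarrow> map f ` A \<in> Q))}"

definition orbit :: "nat \<Rightarrow> nat list set set \<Rightarrow> nat list \<Rightarrow> nat list set" where
  "orbit k Q a = {map g a | g. g \<in> Aut k Q}"

text \<open>Formulas of L_{omega omega}(Q) in the empty signature (only equality and Q).
  Variables are natural numbers.  QF xs phi binds the tuple of variables xs.\<close>
datatype form =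
    Eq nat nat
  | Neg form
  | Conj form form
  | Ex nat form
  | QF "nat list" form

fun fv :: "form \<Rightarrow> nat set" where
  "fv (Eq x y) = {x, y}"
| "fv (Neg p) = fv p"
| "fv (Conj p q) = fv p \<union> fv q"
| "fv (Ex x p) = fv p - {x}"
| "fv (QF xs p) = fv p - set xs"

definition upd_list :: "(nat \<Rightarrow> nat) \<Rightarrow> nat list \<Rightarrow> nat list \<Rightarrow> nat \<Rightarrow> nat" where
  "upd_list \<sigma> xs as = (\<lambda>v. if v \<in> set xs then as ! (LEAST i. i < length xs \<and> xs ! i = v) else \<sigma> v)"

text \<open>Satisfaction in N with quantifier Q of type k; a Q-formula must bind
  a k-tuple of distinct variables.\<close>
fun sat :: "nat \<Rightarrow> nat list set set \<Rightarrow> (nat \<Rightarrow> nat) \<Rightarrow> form \<Rightarrow> bool" where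
  "sat k Q \<sigma> (Eq x y) \<longleftrightarrow> \<sigma> x = \<sigma> y"
| "sat k Q \<sigma> (Neg p) \<longleftrightarrow> \<not> sat k Q \<sigma> p"
| "sat k Q \<sigma> (Conj p q) \<longleftrightarrow> sat k Q \<sigma> p \<and> sat k Q \<sigma> q"
| "sat k Q \<sigma> (Ex x p) \<longleftrightarrow> (\<exists>c. sat k Q (\<sigma>(x := c)) p)"
| "sat k Q \<sigma> (QF xs p) \<longleftrightarrow> length xs = k \<and> distinct xs \<and>
      {as \<in> tuples k. sat k Q (upd_list \<sigma> xs as) p} \<in> Q"

definition definable :: "nat \<Rightarrow> nat list set set \<Rightarrow> nat \<Rightarrow> nat list set \<Rightarrow> bool" where
  "definable k Q n B \<longleftrightarrow> B \<subseteq> tuples n \<and>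
     (\<exists>\<phi>. fv \<phi> \<subseteq> {..<n} \<and>
        (\<forall>b \<in> tuples n. b \<in> B \<longleftrightarrow> sat k Q (\<lambda>i. if i < n then b ! i else 0) \<phi>))"

end

theory Submission
  imports Defs "HOL-Analysis.Function_Topology" "HOL-Combinatorics.Transposition"
begin

text \<open>
  A clopen quantifier Q of type k is determined by finitely many k-tuples: membership of A in Q
  depends only on A \<inter> F for a fixed finite F (compactness of the Cantor space 2^(N^k)).
  The tuples that matter at all -- the essential tuples E -- then form a finite set that
  determines Q, and every automorphism permutes E.  Conversely, a permutation h of N is an
  automorphism as soon as it respects Q on the (finitely many) subsets of E.

  Let c = a @ s, where s lists the elements occurring in tuples of E.  The defining formula
  for the orbit of a existentially quantifies the positions of s and asserts that the valuation
  of c (i) has the same equality type as c and (ii) maps each B \<subseteq> E into Q iff B \<in> Q.  A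
  valuation with (i) is the image of c under some permutation, and by (ii) and the criterion
  above that permutation is an automorphism; so the formula says exactly that b is the image
  of a under an automorphism.
\<close>


section \<open>Finite support of clopen quantifiers\<close>

definition determines :: "nat \<Rightarrow> nat list set set \<Rightarrow> nat list set \<Rightarrow> bool" where
  "determines k Q G \<longleftrightarrow>
     (\<forall>A B. A \<subseteq> tuples k \<longrightarrow> B \<subseteq> tuples k \<longrightarrow> A \<inter> G = B \<inter> G \<longrightarrow> (A \<in> Q \<longleftrightarrow> B \<in> Q))"

lemma determinesD:
  "determines k Q G \<Longrightarrow> A \<subseteq> tuples k \<Longrightarrow> B \<subseteq> tuples k \<Longrightarrow> A \<inter> G = B \<inter> G \<Longrightarrow>
     A \<in> Q \<longleftrightarrow> B \<in> Q"
  unfolding determines_def by blast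

lemma determines_restrict:
  "determines k Q G \<Longrightarrow> A \<subseteq> tuples k \<Longrightarrow> A \<inter> G \<in> Q \<longleftrightarrow> A \<in> Q"
  by (rule determinesD) auto

lemma open_in_cantorD:
  assumes "open_in_cantor k U" and "A \<in> U"
  obtains F where "finite F" "F \<subseteq> tuples k"
    "\<And>B. B \<subseteq> tuples k \<Longrightarrow> B \<inter> F = A \<inter> F \<Longrightarrow> B \<in> U"
proof -
  from assms obtain F where "finite F" "F \<subseteq> tuples k"
    and "\<forall>B. B \<subseteq> tuples k \<longrightarrow> B \<inter> F = A \<inter> F \<longrightarrow> B \<in> U"
    unfolding open_in_cantor_def by metis
  then show thesis by (metis that)
qed

definition window :: "nat \<Rightarrow> nat list set set \<Rightarrow> nat list set \<Rightarrow> nat list set \<Rightarrow> bool" where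
  "window k Q A F \<longleftrightarrow> finite F \<and> F \<subseteq> tuples k \<and>
     (\<forall>B. B \<subseteq> tuples k \<longrightarrow> B \<inter> F = A \<inter> F \<longrightarrow> (B \<in> Q \<longleftrightarrow> A \<in> Q))"

lemma windowD:
  "window k Q A F \<Longrightarrow> B \<subseteq> tuples k \<Longrightarrow> B \<inter> F = A \<inter> F \<Longrightarrow> B \<in> Q \<longleftrightarrow> A \<in> Q"
  unfolding window_def by blast

text \<open>Local version of finite support: Q and its complement are both open.\<close>
lemma clopen_window:
  assumes "clopen_quantifier k Q" and "A \<subseteq> tuples k"
  shows "\<exists>F. window k Q A F"
proof (cases "A \<in> Q")
  case True
  have "open_in_cantor k Q" using assms(1) unfolding clopen_quantifier_def by simp
  from this True obtain F where "finite F" "F \<subseteq> tuples k"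
    "\<And>B. B \<subseteq> tuples k \<Longrightarrow> B \<inter> F = A \<inter> F \<Longrightarrow> B \<in> Q"
    by (metis open_in_cantorD)
  then have "window k Q A F" using True unfolding window_def by simp
  then show ?thesis ..
next
  case False
  then have A: "A \<in> Pow (tuples k) - Q" using assms(2) by blast
  have "open_in_cantor k (Pow (tuples k) - Q)"
    using assms(1) unfolding clopen_quantifier_def by simp
  from this A obtain F where "finite F" "F \<subseteq> tuples k"
    "\<And>B. B \<subseteq> tuples k \<Longrightarrow> B \<inter> F = A \<inter> F \<Longrightarrow> B \<in> Pow (tuples k) - Q"
    by (metis open_in_cantorD)
  then have "window k Q A F" using False unfolding window_def by simp
  then show ?thesis ..
qed

definition cantor_space :: "nat \<Rightarrow> (nat list \<Rightarrow> bool) topology" where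
  "cantor_space k = product_topology (\<lambda>_. discrete_topology UNIV) (tuples k)"

definition char_fun :: "nat \<Rightarrow> nat list set \<Rightarrow> nat list \<Rightarrow> bool" where
  "char_fun k A = restrict (\<lambda>t. t \<in> A) (tuples k)"

definition cylinder :: "nat \<Rightarrow> nat list set \<Rightarrow> nat list set \<Rightarrow> (nat list \<Rightarrow> bool) set" where
  "cylinder k F A = (\<Pi>\<^sub>E t\<in>tuples k. if t \<in> F then {t \<in> A} else UNIV)"

lemma compact_cantor_space: "compact_space (cantor_space k)"
  unfolding cantor_space_def
  by (simp add: compact_space_product_topology compact_space_discrete_topology)

lemma openin_cylinder:
  assumes "finite F"
  shows "openin (cantor_space k) (cylinder k F A)"
proof -
  have "{t \<in> tuples k. (if t \<in> F then {t \<in> A} else UNIV) \<noteq> UNIV} \<subseteq> F" by auto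
  then show ?thesis
    unfolding cantor_space_def cylinder_def openin_PiE_gen
    using finite_subset assms by auto
qed

lemma topspace_cantor_space:
  "topspace (cantor_space k) = char_fun k ` Pow (tuples k)"
proof (intro equalityI subsetI)
  fix h assume "h \<in> topspace (cantor_space k)"
  then have "h = char_fun k {t \<in> tuples k. h t}"
    by (auto simp: cantor_space_def char_fun_def PiE_def extensional_def fun_eq_iff)
  then show "h \<in> char_fun k ` Pow (tuples k)" by blast
qed (auto simp: cantor_space_def char_fun_def)

lemma char_fun_in_cylinder:
  assumes "F \<subseteq> tuples k"
  shows "char_fun k B \<in> cylinder k F A \<longleftrightarrow> B \<inter> F = A \<inter> F"
  using assms by (auto simp: char_fun_def cylinder_def PiE_def Pi_def)

text \<open>Compactness turns the local windows into one finite set determining Q.\<close>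
lemma clopen_finite_support:
  assumes "clopen_quantifier k Q"
  obtains F where "finite F" "determines k Q F"
proof -
  have "\<forall>A\<in>Pow (tuples k). \<exists>F. window k Q A F"
    using clopen_window[OF assms] by simp
  from bchoice[OF this] obtain FA where "\<forall>A\<in>Pow (tuples k). window k Q A (FA A)" ..
  then have FA: "window k Q A (FA A)" if "A \<subseteq> tuples k" for A using that by blast
  let ?U = "(\<lambda>A. cylinder k (FA A) A) ` Pow (tuples k)"
  have cover: "topspace (cantor_space k) \<subseteq> \<Union> ?U"
  proof
    fix h assume "h \<in> topspace (cantor_space k)"
    then obtain A where A: "A \<subseteq> tuples k" "h = char_fun k A"
      unfolding topspace_cantor_space by blast
    then have "h \<in> cylinder k (FA A) A"
      using FA[OF A(1)] char_fun_in_cylinder unfolding window_def by simp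
    then show "h \<in> \<Union> ?U" using A(1) by blast
  qed
  have opens: "\<forall>U\<in>?U. openin (cantor_space k) U"
    using FA openin_cylinder unfolding window_def by blast
  have "\<exists>\<F>. finite \<F> \<and> \<F> \<subseteq> ?U \<and> topspace (cantor_space k) \<subseteq> \<Union> \<F>"
    using compact_cantor_space[unfolded compact_space_alt, rule_format, OF conjI[OF opens cover]] .
  then obtain \<F> where \<F>: "finite \<F>" "\<F> \<subseteq> ?U" "topspace (cantor_space k) \<subseteq> \<Union> \<F>"
    by (elim exE conjE)
  from finite_subset_image[OF \<F>(1,2)] obtain As where As: "As \<subseteq> Pow (tuples k)" "finite As"
    and \<F>_eq: "\<F> = (\<lambda>A. cylinder k (FA A) A) ` As"
    by (elim exE conjE)
  have finite_cover: "topspace (cantor_space k) \<subseteq> (\<Union>A\<in>As. cylinder k (FA A) A)"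
    using \<F>(3) unfolding \<F>_eq .
  have FA_As: "window k Q A (FA A)" if "A \<in> As" for A
    using FA As(1) that by blast
  show thesis
  proof
    show "finite (\<Union>A\<in>As. FA A)" using As(2) FA_As unfolding window_def by auto
    show "determines k Q (\<Union>A\<in>As. FA A)"
      unfolding determines_def
    proof (intro allI impI)
      fix B C assume B: "B \<subseteq> tuples k" and C: "C \<subseteq> tuples k"
        and BC: "B \<inter> (\<Union>A\<in>As. FA A) = C \<inter> (\<Union>A\<in>As. FA A)"
      have "char_fun k B \<in> topspace (cantor_space k)" using B topspace_cantor_space by blast
      then obtain A where A: "A \<in> As" "char_fun k B \<in> cylinder k (FA A) A"
        using finite_cover by blast
      note window = FA_As[OF A(1)]
      have B_A: "B \<inter> FA A = A \<inter> FA A"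
        using A(2) char_fun_in_cylinder window unfolding window_def by simp
      have sub: "FA A \<subseteq> (\<Union>A\<in>As. FA A)" using A(1) by (rule UN_upper)
      have "C \<inter> FA A = (C \<inter> (\<Union>A\<in>As. FA A)) \<inter> FA A" using sub by auto
      also have "\<dots> = (B \<inter> (\<Union>A\<in>As. FA A)) \<inter> FA A" using BC by simp
      also have "\<dots> = A \<inter> FA A" using sub B_A by auto
      finally have C_A: "C \<inter> FA A = A \<inter> FA A" .
      show "B \<in> Q \<longleftrightarrow> C \<in> Q"
        using windowD[OF window B B_A] windowD[OF window C C_A] by simp
    qed
  qed
qed


section \<open>Essential tuples\<close>

definition essential :: "nat \<Rightarrow> nat list set set \<Rightarrow> nat list set" where
  "essential k Q = {t \<in> tuples k. \<exists>A \<subseteq> tuples k. (insert t A \<in> Q) \<noteq> (A - {t} \<in> Q)}"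

lemma essential_tuples: "essential k Q \<subseteq> tuples k"
  unfolding essential_def by blast

lemma essential_subset_determining:
  assumes det: "determines k Q G"
  shows "essential k Q \<subseteq> G"
proof
  fix t assume "t \<in> essential k Q"
  then obtain A where t: "t \<in> tuples k" and A: "A \<subseteq> tuples k"
    and differ: "(insert t A \<in> Q) \<noteq> (A - {t} \<in> Q)"
    unfolding essential_def by blast
  show "t \<in> G"
  proof (rule ccontr)
    assume "t \<notin> G"
    then have "insert t A \<inter> G = (A - {t}) \<inter> G" by blast
    moreover have "insert t A \<subseteq> tuples k" "A - {t} \<subseteq> tuples k" using t A by auto
    ultimately show False using determinesD[OF det] differ by blast
  qed
qed

lemma inessential_irrelevant:
  assumes "t \<notin> essential k Q" and A: "A \<subseteq> tuples k" and B: "B \<subseteq> tuples k"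
    and AB: "A - {t} = B - {t}"
  shows "A \<in> Q \<longleftrightarrow> B \<in> Q"
proof (cases "t \<in> tuples k")
  case True
  with assms(1) A have same: "insert t A \<in> Q \<longleftrightarrow> A - {t} \<in> Q"
    unfolding essential_def by blast
  have "X \<in> Q \<longleftrightarrow> A - {t} \<in> Q" if "X - {t} = A - {t}" for X
  proof (cases "t \<in> X")
    case True
    then have "X = insert t A" using that by blast
    then show ?thesis using same by simp
  next
    case False
    then have "X = A - {t}" using that by blast
    then show ?thesis by simp
  qed
  from this[of A] this[of B] AB show ?thesis by simp
next
  case False
  then have "A = B" using A B AB by blast
  then show ?thesis by simp
qed

lemma determines_remove_inessential:
  assumes det: "determines k Q G" and t: "t \<notin> essential k Q"
  shows "determines k Q (G - {t})"
  unfolding determines_def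
proof (intro allI impI)
  fix A B assume A: "A \<subseteq> tuples k" and B: "B \<subseteq> tuples k"
    and AB: "A \<inter> (G - {t}) = B \<inter> (G - {t})"
  define A' where "A' = (A - {t}) \<union> (B \<inter> {t})"
  have A': "A' \<subseteq> tuples k" using A B unfolding A'_def by blast
  have "A \<in> Q \<longleftrightarrow> A' \<in> Q"
    using inessential_irrelevant[OF t A A'] unfolding A'_def by blast
  also have "A' \<in> Q \<longleftrightarrow> B \<in> Q"
    using determinesD[OF det A' B] AB unfolding A'_def by blast
  finally show "A \<in> Q \<longleftrightarrow> B \<in> Q" .
qed

lemma determines_essential:
  assumes "finite G" and det: "determines k Q G"
  shows "determines k Q (essential k Q)"
proof -
  have "determines k Q (G - R)" if "finite R" "R \<inter> essential k Q = {}" for R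
    using that
  proof (induction R rule: finite_induct)
    case empty
    then show ?case using det by simp
  next
    case (insert t R)
    have "determines k Q (G - R)" using insert.IH insert.prems by simp
    moreover have "t \<notin> essential k Q" using insert.prems by simp
    ultimately have "determines k Q (G - R - {t})" by (rule determines_remove_inessential)
    then show ?case by (metis Diff_insert)
  qed
  moreover have "G - (G - essential k Q) = essential k Q"
    using essential_subset_determining[OF det] by blast
  moreover have "(G - essential k Q) \<inter> essential k Q = {}" by blast
  ultimately show ?thesis using assms(1) by (metis finite_Diff)
qed

lemma clopen_essential:
  assumes "clopen_quantifier k Q"
  shows "finite (essential k Q)" and "determines k Q (essential k Q)"
proof -
  obtain F where F: "finite F" "determines k Q F"
    using clopen_finite_support[OF assms] by metis
  show "finite (essential k Q)"
    using finite_subset[OF essential_subset_determining[OF F(2)] F(1)] .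
  show "determines k Q (essential k Q)" using determines_essential[OF F] .
qed


section \<open>Recognising automorphisms\<close>

lemma map_tuples: "A \<subseteq> tuples k \<Longrightarrow> map h ` A \<subseteq> tuples k"
  unfolding tuples_def by auto

text \<open>A map respecting Q on subsets of the (determining) essential tuples sends essential tuples
  to essential tuples: otherwise toggling the image of an essential tuple would be invisible.\<close>
lemma map_essential_subset:
  assumes det: "determines k Q (essential k Q)"
    and preserves: "\<And>B. B \<subseteq> essential k Q \<Longrightarrow> map h ` B \<in> Q \<longleftrightarrow> B \<in> Q"
  shows "map h ` essential k Q \<subseteq> essential k Q"
proof
  let ?E = "essential k Q"
  have E_tuples: "?E \<subseteq> tuples k" by (rule essential_tuples)
  fix u assume "u \<in> map h ` ?E"
  then obtain t where t: "t \<in> ?E" and u: "u = map h t" by blast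
  then obtain A where A: "A \<subseteq> tuples k" and differ: "(insert t A \<in> Q) \<noteq> (A - {t} \<in> Q)"
    unfolding essential_def by blast
  show "u \<in> ?E"
  proof (rule ccontr)
    assume u_out: "u \<notin> ?E"
    define A1 where "A1 = (A - {t}) \<inter> ?E"
    have A1: "A1 \<subseteq> ?E" "A1 \<subseteq> tuples k" using E_tuples unfolding A1_def by auto
    have t_A1: "insert t A1 \<subseteq> ?E" using A1(1) t by simp
    then have t_A1_tuples: "insert t A1 \<subseteq> tuples k" using E_tuples by (rule subset_trans)
    have t_A: "insert t A \<subseteq> tuples k" using A t E_tuples by blast
    have "insert t A1 \<inter> ?E = insert t A \<inter> ?E" using t unfolding A1_def by blast
    from determinesD[OF det t_A1_tuples t_A this]
    have same_insert: "insert t A1 \<in> Q \<longleftrightarrow> insert t A \<in> Q" .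
    have "A1 \<inter> ?E = (A - {t}) \<inter> ?E" unfolding A1_def by blast
    from determinesD[OF det A1(2) _ this] A
    have same_delete: "A1 \<in> Q \<longleftrightarrow> A - {t} \<in> Q" by blast
    have same_image: "map h ` insert t A1 \<in> Q \<longleftrightarrow> map h ` A1 \<in> Q"
    proof (rule determinesD[OF det])
      show "map h ` insert t A1 \<subseteq> tuples k" "map h ` A1 \<subseteq> tuples k"
        using map_tuples t_A1_tuples A1(2) by blast+
      show "map h ` insert t A1 \<inter> ?E = map h ` A1 \<inter> ?E" using u u_out by auto
    qed
    show False
      using same_insert same_delete same_image preserves[OF t_A1] preserves[OF A1(1)] differ
      by simp
  qed
qed

lemma automorphism_criterion:
  assumes fin: "finite (essential k Q)" and det: "determines k Q (essential k Q)"
    and "bij h"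
    and preserves: "\<And>B. B \<subseteq> essential k Q \<Longrightarrow> map h ` B \<in> Q \<longleftrightarrow> B \<in> Q"
  shows "h \<in> Aut k Q"
proof -
  let ?E = "essential k Q"
  have inj: "inj (map h)" using \<open>bij h\<close> bij_is_inj inj_mapI by blast
  have onto: "map h ` ?E = ?E"
    using endo_inj_surj[OF fin map_essential_subset[OF det preserves]] inj inj_on_subset by blast
  have "A \<in> Q \<longleftrightarrow> map h ` A \<in> Q" if A: "A \<subseteq> tuples k" for A
  proof -
    have "A \<in> Q \<longleftrightarrow> A \<inter> ?E \<in> Q" using determines_restrict[OF det A] by simp
    also have "\<dots> \<longleftrightarrow> map h ` (A \<inter> ?E) \<in> Q" using preserves[of "A \<inter> ?E"] by simp
    also have "map h ` (A \<inter> ?E) = map h ` A \<inter> ?E" using image_Int[OF inj] onto by simp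
    also have "\<dots> \<in> Q \<longleftrightarrow> map h ` A \<in> Q" using determines_restrict[OF det map_tuples[OF A]] .
    finally show ?thesis .
  qed
  then show ?thesis unfolding Aut_def using \<open>bij h\<close> by blast
qed

lemma extend_to_bij:
  fixes xs ys :: "'a list"
  assumes "length xs = length ys"
    and "\<And>i j. i < length xs \<Longrightarrow> j < length xs \<Longrightarrow> xs ! i = xs ! j \<longleftrightarrow> ys ! i = ys ! j"
  shows "\<exists>h. bij h \<and> map h xs = ys"
  using assms
proof (induction xs arbitrary: ys)
  case Nil
  then show ?case using bij_id by auto
next
  case (Cons x xs)
  then obtain y ys' where ys: "ys = y # ys'" by (cases ys) auto
  have same_pattern: "xs ! i = xs ! j \<longleftrightarrow> ys' ! i = ys' ! j"
    if "i < length xs" "j < length xs" for i j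
    using Cons.prems(2)[of "Suc i" "Suc j"] that ys by simp
  have head_pattern: "x = xs ! j \<longleftrightarrow> y = ys' ! j" if "j < length xs" for j
    using Cons.prems(2)[of 0 "Suc j"] that ys by simp
  obtain h where h: "bij h" "map h xs = ys'"
    using Cons.IH[of ys'] Cons.prems(1) ys same_pattern by auto
  show ?case
  proof (cases "x \<in> set xs")
    case True
    then obtain j where j: "j < length xs" "xs ! j = x" by (auto simp: in_set_conv_nth)
    then have "h x = y" using head_pattern[of j] h(2) by auto
    then show ?thesis using h ys by auto
  next
    case False
    have y_new: "y \<notin> set ys'"
    proof
      assume "y \<in> set ys'"
      then obtain j where "j < length xs" "ys' ! j = y"
        using h(2) by (auto simp: in_set_conv_nth)
      then show False using head_pattern[of j] False by auto
    qed
    text \<open>Correct h at x by a transposition, which leaves the images of xs untouched.\<close>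
    define h' where "h' = transpose y (h x) \<circ> h"
    have "h' z = h z" if "z \<in> set xs" for z
    proof -
      have "h z \<noteq> y" using that h(2) y_new by auto
      moreover have "h z \<noteq> h x" using that False bij_is_inj[OF h(1)] by (metis injD)
      ultimately show ?thesis unfolding h'_def by simp
    qed
    then have "map h' xs = ys'" using h(2) by (metis map_eq_conv)
    moreover have "bij h'" unfolding h'_def using h(1) by (simp add: bij_comp)
    moreover have "h' x = y" unfolding h'_def by simp
    ultimately show ?thesis using ys by auto
  qed
qed


definition true_form :: form where
  "true_form = Ex 0 (Eq 0 0)"

fun conj_list :: "form list \<Rightarrow> form" where
  "conj_list [] = true_form"
| "conj_list (p # ps) = Conj p (conj_list ps)"

definition disj_list :: "form list \<Rightarrow> form" where
  "disj_list ps = Neg (conj_list (map Neg ps))"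

fun ex_list :: "nat list \<Rightarrow> form \<Rightarrow> form" where
  "ex_list [] p = p"
| "ex_list (v # vs) p = Ex v (ex_list vs p)"

lemma sat_conj_list: "sat k Q \<sigma> (conj_list ps) \<longleftrightarrow> (\<forall>p\<in>set ps. sat k Q \<sigma> p)"
  by (induction ps) (auto simp: true_form_def)

lemma fv_conj_list: "fv (conj_list ps) \<subseteq> \<Union> (fv ` set ps)"
  by (induction ps) (auto simp: true_form_def)

lemma sat_disj_list: "sat k Q \<sigma> (disj_list ps) \<longleftrightarrow> (\<exists>p\<in>set ps. sat k Q \<sigma> p)"
  by (simp add: disj_list_def sat_conj_list)

lemma fv_disj_list: "fv (disj_list ps) \<subseteq> \<Union> (fv ` set ps)"
  using fv_conj_list[of "map Neg ps"] by (simp add: disj_list_def)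

lemma sat_ex_list:
  "sat k Q \<sigma> (ex_list vs p) \<longleftrightarrow> (\<exists>\<tau>. (\<forall>v. v \<notin> set vs \<longrightarrow> \<tau> v = \<sigma> v) \<and> sat k Q \<tau> p)"
proof (induction vs arbitrary: \<sigma>)
  case Nil
  then show ?case by (auto simp: fun_eq_iff)
next
  case (Cons v vs)
  show ?case
  proof
    assume "sat k Q \<sigma> (ex_list (v # vs) p)"
    then obtain c where "sat k Q (\<sigma>(v := c)) (ex_list vs p)" by auto
    then obtain \<tau> where "\<forall>w. w \<notin> set vs \<longrightarrow> \<tau> w = (\<sigma>(v := c)) w" "sat k Q \<tau> p"
      using Cons.IH by blast
    then show "\<exists>\<tau>. (\<forall>w. w \<notin> set (v # vs) \<longrightarrow> \<tau> w = \<sigma> w) \<and> sat k Q \<tau> p"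
      by (intro exI[of _ \<tau>]) auto
  next
    assume "\<exists>\<tau>. (\<forall>w. w \<notin> set (v # vs) \<longrightarrow> \<tau> w = \<sigma> w) \<and> sat k Q \<tau> p"
    then obtain \<tau> where \<tau>: "\<forall>w. w \<notin> set (v # vs) \<longrightarrow> \<tau> w = \<sigma> w" "sat k Q \<tau> p" by blast
    then have "\<forall>w. w \<notin> set vs \<longrightarrow> \<tau> w = (\<sigma>(v := \<tau> v)) w" by auto
    then have "sat k Q (\<sigma>(v := \<tau> v)) (ex_list vs p)" using Cons.IH \<tau>(2) by blast
    then show "sat k Q \<sigma> (ex_list (v # vs) p)" by auto
  qed
qed

lemma fv_ex_list: "fv (ex_list vs p) = fv p - set vs"
  by (induction vs) auto

lemma upd_list_block:
  "upd_list \<sigma> [b..<b + k] as v = (if b \<le> v \<and> v < b + k then as ! (v - b) else \<sigma> v)"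
proof (cases "b \<le> v \<and> v < b + k")
  case True
  have "(LEAST i. i < k \<and> [b..<b + k] ! i = v) = v - b"
    by (rule Least_equality) (use True in auto)
  then show ?thesis using True unfolding upd_list_def by simp
next
  case False
  then show ?thesis unfolding upd_list_def by auto
qed

definition list_of :: "'a set \<Rightarrow> 'a list" where
  "list_of B = (SOME l. set l = B)"

lemma set_list_of: "finite B \<Longrightarrow> set (list_of B) = B"
  unfolding list_of_def by (rule someI_ex) (rule finite_list)

definition position :: "'a list \<Rightarrow> 'a \<Rightarrow> nat" where
  "position c e = (LEAST i. i < length c \<and> c ! i = e)"

lemma position:
  assumes "e \<in> set c"
  shows "position c e < length c" and "c ! position c e = e"
proof -
  obtain i where "i < length c \<and> c ! i = e" using assms by (auto simp: in_set_conv_nth)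
  then have "position c e < length c \<and> c ! position c e = e"
    unfolding position_def by (rule LeastI)
  then show "position c e < length c" and "c ! position c e = e" by auto
qed


section \<open>Formulas talking about a list of named elements\<close>

text \<open>In this section the variables 0, ..., length c - 1 stand for the entries of a list c of
  natural numbers; an element e of c is referred to by the variable position c e, so a
  valuation \<sigma> sends e to \<sigma> (position c e).\<close>

definition eq_literal :: "nat list \<Rightarrow> nat \<Rightarrow> nat \<Rightarrow> form" where
  "eq_literal c u v = (if c ! u = c ! v then Eq u v else Neg (Eq u v))"

definition eq_type_form :: "nat list \<Rightarrow> form" where
  "eq_type_form c =
     conj_list (concat (map (\<lambda>u. map (eq_literal c u) [0..<length c]) [0..<length c]))"

lemma sat_eq_type_form:
  "sat k Q \<sigma> (eq_type_form c) \<longleftrightarrow> (\<forall>u<length c. \<forall>v<length c. \<sigma> u = \<sigma> v \<longleftrightarrow> c ! u = c ! v)"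
proof -
  have "sat k Q \<sigma> (eq_literal c u v) \<longleftrightarrow> (\<sigma> u = \<sigma> v \<longleftrightarrow> c ! u = c ! v)" for u v
    by (simp add: eq_literal_def)
  then show ?thesis unfolding eq_type_form_def sat_conj_list by auto
qed

lemma fv_eq_type_form: "fv (eq_type_form c) \<subseteq> {..<length c}"
  using fv_conj_list unfolding eq_type_form_def eq_literal_def by fastforce

definition tuple_form :: "nat \<Rightarrow> nat list \<Rightarrow> nat list \<Rightarrow> form" where
  "tuple_form k c t = conj_list (map (\<lambda>j. Eq (length c + j) (position c (t ! j))) [0..<k])"

lemma sat_tuple_form:
  assumes as: "length as = k" and t: "length t = k" "set t \<subseteq> set c"
  shows "sat k' Q (upd_list \<sigma> [length c..<length c + k] as) (tuple_form k c t)
           \<longleftrightarrow> as = map (\<lambda>e. \<sigma> (position c e)) t"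
proof -
  have "upd_list \<sigma> [length c..<length c + k] as (position c (t ! j)) = \<sigma> (position c (t ! j))"
    if "j < k" for j
  proof -
    have "t ! j \<in> set c" using t that by (metis nth_mem subsetD)
    then have "position c (t ! j) < length c" by (rule position(1))
    then show ?thesis by (simp add: upd_list_block)
  qed
  then have "sat k' Q (upd_list \<sigma> [length c..<length c + k] as) (tuple_form k c t)
      \<longleftrightarrow> (\<forall>j<k. as ! j = \<sigma> (position c (t ! j)))"
    unfolding tuple_form_def sat_conj_list by (auto simp: upd_list_block)
  also have "\<dots> \<longleftrightarrow> as = map (\<lambda>e. \<sigma> (position c e)) t"
    using as t(1) by (auto simp: list_eq_iff_nth_eq)
  finally show ?thesis .
qed

lemma fv_tuple_form:
  assumes "length t = k" "set t \<subseteq> set c"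
  shows "fv (tuple_form k c t) \<subseteq> {..<length c + k}"
proof -
  have "position c (t ! j) < length c" if "j < k" for j
    using assms that by (metis nth_mem position(1) subsetD)
  then show ?thesis
    using fv_conj_list[of "map (\<lambda>j. Eq (length c + j) (position c (t ! j))) [0..<k]"]
    unfolding tuple_form_def by fastforce
qed

definition image_form :: "nat \<Rightarrow> nat list \<Rightarrow> nat list set \<Rightarrow> form" where
  "image_form k c B =
     QF [length c..<length c + k] (disj_list (map (tuple_form k c) (list_of B)))"

lemma sat_image_form:
  assumes B: "finite B" "B \<subseteq> tuples k" "\<And>t. t \<in> B \<Longrightarrow> set t \<subseteq> set c"
  shows "sat k Q \<sigma> (image_form k c B) \<longleftrightarrow> map (\<lambda>e. \<sigma> (position c e)) ` B \<in> Q"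
proof -
  let ?\<sigma> = "\<lambda>as. upd_list \<sigma> [length c..<length c + k] as"
  let ?\<phi> = "disj_list (map (tuple_form k c) (list_of B))"
  let ?f = "\<lambda>t. map (\<lambda>e. \<sigma> (position c e)) t"
  have sat_\<phi>: "sat k Q (?\<sigma> as) ?\<phi> \<longleftrightarrow> (\<exists>t\<in>B. as = ?f t)" if "length as = k" for as
  proof -
    have "sat k Q (?\<sigma> as) ?\<phi> \<longleftrightarrow> (\<exists>t\<in>B. sat k Q (?\<sigma> as) (tuple_form k c t))"
      by (simp add: sat_disj_list set_list_of[OF B(1)])
    also have "\<dots> \<longleftrightarrow> (\<exists>t\<in>B. as = ?f t)"
    proof (rule bex_cong[OF refl])
      fix t assume "t \<in> B"
      then have "length t = k" "set t \<subseteq> set c" using B(2,3) unfolding tuples_def by auto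
      then show "sat k Q (?\<sigma> as) (tuple_form k c t) \<longleftrightarrow> as = ?f t"
        by (rule sat_tuple_form[OF that])
    qed
    finally show ?thesis .
  qed
  have "{as \<in> tuples k. sat k Q (?\<sigma> as) ?\<phi>} = ?f ` B"
  proof (intro equalityI subsetI)
    fix as assume "as \<in> {as \<in> tuples k. sat k Q (?\<sigma> as) ?\<phi>}"
    then show "as \<in> ?f ` B" using sat_\<phi> unfolding tuples_def by blast
  next
    fix as assume "as \<in> ?f ` B"
    then obtain t where t: "t \<in> B" "as = ?f t" by blast
    then have "length as = k" using B(2) unfolding tuples_def by auto
    then show "as \<in> {as \<in> tuples k. sat k Q (?\<sigma> as) ?\<phi>}"
      using sat_\<phi> t unfolding tuples_def by blast
  qed
  then show ?thesis unfolding image_form_def by simp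
qed

lemma fv_image_form:
  assumes "finite B" "B \<subseteq> tuples k" "\<And>t. t \<in> B \<Longrightarrow> set t \<subseteq> set c"
  shows "fv (image_form k c B) \<subseteq> {..<length c}"
proof -
  have "fv (tuple_form k c t) \<subseteq> {..<length c + k}" if "t \<in> B" for t
    using fv_tuple_form assms that unfolding tuples_def by blast
  then have "(\<Union>t\<in>B. fv (tuple_form k c t)) \<subseteq> {..<length c + k}" by (rule UN_least)
  then have "fv (disj_list (map (tuple_form k c) (list_of B))) \<subseteq> {..<length c + k}"
    using fv_disj_list[of "map (tuple_form k c) (list_of B)"] set_list_of[OF assms(1)] by simp
  then show ?thesis unfolding image_form_def by auto
qed

definition preserve_literal :: "nat \<Rightarrow> nat list set set \<Rightarrow> nat list \<Rightarrow> nat list set \<Rightarrow> form" where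
  "preserve_literal k Q c B = (if B \<in> Q then image_form k c B else Neg (image_form k c B))"

definition preserve_form :: "nat \<Rightarrow> nat list set set \<Rightarrow> nat list \<Rightarrow> nat list set \<Rightarrow> form" where
  "preserve_form k Q c D = conj_list (map (preserve_literal k Q c) (list_of (Pow D)))"

lemma sat_preserve_form:
  assumes D: "finite D" "D \<subseteq> tuples k" "\<And>t. t \<in> D \<Longrightarrow> set t \<subseteq> set c"
  shows "sat k Q \<sigma> (preserve_form k Q c D) \<longleftrightarrow>
           (\<forall>B \<subseteq> D. map (\<lambda>e. \<sigma> (position c e)) ` B \<in> Q \<longleftrightarrow> B \<in> Q)"
proof -
  have "sat k Q \<sigma> (preserve_literal k Q c B) \<longleftrightarrow>
      (map (\<lambda>e. \<sigma> (position c e)) ` B \<in> Q \<longleftrightarrow> B \<in> Q)" if "B \<subseteq> D" for B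
  proof -
    have "sat k Q \<sigma> (image_form k c B) \<longleftrightarrow> map (\<lambda>e. \<sigma> (position c e)) ` B \<in> Q"
      using that D by (intro sat_image_form) (auto intro: finite_subset)
    then show ?thesis unfolding preserve_literal_def by simp
  qed
  then show ?thesis
    unfolding preserve_form_def sat_conj_list using set_list_of[of "Pow D"] D(1) by auto
qed

lemma fv_preserve_form:
  assumes D: "finite D" "D \<subseteq> tuples k" "\<And>t. t \<in> D \<Longrightarrow> set t \<subseteq> set c"
  shows "fv (preserve_form k Q c D) \<subseteq> {..<length c}"
proof -
  have "fv (preserve_literal k Q c B) \<subseteq> {..<length c}" if "B \<in> Pow D" for B
  proof -
    have "fv (image_form k c B) \<subseteq> {..<length c}"
      using that D by (intro fv_image_form) (auto intro: finite_subset)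
    then show ?thesis unfolding preserve_literal_def by simp
  qed
  then have "(\<Union>B\<in>Pow D. fv (preserve_literal k Q c B)) \<subseteq> {..<length c}" by (rule UN_least)
  then show ?thesis
    using fv_conj_list[of "map (preserve_literal k Q c) (list_of (Pow D))"]
      set_list_of[of "Pow D"] D(1)
    unfolding preserve_form_def by simp
qed


section \<open>The defining formula of an orbit\<close>

definition orbit_matrix :: "nat \<Rightarrow> nat list set set \<Rightarrow> nat list \<Rightarrow> form" where
  "orbit_matrix k Q c = Conj (eq_type_form c) (preserve_form k Q c (essential k Q))"

lemma sat_orbit_matrix:
  assumes Qc: "clopen_quantifier k Q"
    and names: "\<And>t. t \<in> essential k Q \<Longrightarrow> set t \<subseteq> set c"
  shows "sat k Q \<sigma> (orbit_matrix k Q c) \<longleftrightarrow> (\<exists>h\<in>Aut k Q. \<forall>u<length c. \<sigma> u = h (c ! u))"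
proof -
  let ?E = "essential k Q"
  note fin = clopen_essential(1)[OF Qc] and det = clopen_essential(2)[OF Qc]
  have sat_preserve: "sat k Q \<sigma> (preserve_form k Q c ?E) \<longleftrightarrow>
      (\<forall>B \<subseteq> ?E. map (\<lambda>e. \<sigma> (position c e)) ` B \<in> Q \<longleftrightarrow> B \<in> Q)"
    using sat_preserve_form[OF fin essential_tuples names] .
  have image_eq: "map (\<lambda>e. \<sigma> (position c e)) ` B = map h ` B"
    if "B \<subseteq> ?E" and h: "\<forall>u<length c. \<sigma> u = h (c ! u)" for B h
  proof -
    have \<sigma>_h: "\<sigma> (position c e) = h e" if "e \<in> set c" for e
      using h[rule_format, OF position(1)[OF that]] position(2)[OF that] by simp
    have "map (\<lambda>e. \<sigma> (position c e)) t = map h t" if "t \<in> B" for t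
    proof (rule map_cong[OF refl])
      fix e assume "e \<in> set t"
      moreover have "set t \<subseteq> set c" using names \<open>B \<subseteq> ?E\<close> that by blast
      ultimately show "\<sigma> (position c e) = h e" using \<sigma>_h by blast
    qed
    then show ?thesis by (rule image_cong[OF refl])
  qed
  show ?thesis
  proof
    assume "sat k Q \<sigma> (orbit_matrix k Q c)"
    then have "sat k Q \<sigma> (eq_type_form c)" and "sat k Q \<sigma> (preserve_form k Q c ?E)"
      unfolding orbit_matrix_def by simp_all
    then have eq_type: "\<forall>u<length c. \<forall>v<length c. \<sigma> u = \<sigma> v \<longleftrightarrow> c ! u = c ! v"
      and preserve: "\<forall>B \<subseteq> ?E. map (\<lambda>e. \<sigma> (position c e)) ` B \<in> Q \<longleftrightarrow> B \<in> Q"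
      unfolding sat_eq_type_form sat_preserve by blast+
    obtain h where "bij h" and h_c: "map h c = map \<sigma> [0..<length c]"
      using extend_to_bij[of c "map \<sigma> [0..<length c]"] eq_type by auto
    then have h: "\<forall>u<length c. \<sigma> u = h (c ! u)" by (metis length_map nth_map nth_upt add_0)
    have "h \<in> Aut k Q"
      using automorphism_criterion[OF fin det \<open>bij h\<close>] preserve image_eq[OF _ h] by simp
    with h show "\<exists>h\<in>Aut k Q. \<forall>u<length c. \<sigma> u = h (c ! u)" by blast
  next
    assume "\<exists>h\<in>Aut k Q. \<forall>u<length c. \<sigma> u = h (c ! u)"
    then obtain h where aut: "h \<in> Aut k Q" and h: "\<forall>u<length c. \<sigma> u = h (c ! u)" by blast
    then have "inj h" unfolding Aut_def using bij_is_inj by blast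
    then have "sat k Q \<sigma> (eq_type_form c)"
      unfolding sat_eq_type_form using h by (auto dest: injD)
    moreover have "map h ` B \<in> Q \<longleftrightarrow> B \<in> Q" if "B \<subseteq> ?E" for B
      using aut that essential_tuples unfolding Aut_def by blast
    then have "sat k Q \<sigma> (preserve_form k Q c ?E)"
      unfolding sat_preserve using image_eq[OF _ h] by simp
    ultimately show "sat k Q \<sigma> (orbit_matrix k Q c)" unfolding orbit_matrix_def by simp
  qed
qed

definition orbit_names :: "nat \<Rightarrow> nat list set set \<Rightarrow> nat list \<Rightarrow> nat list" where
  "orbit_names k Q a = a @ sorted_list_of_set (\<Union> (set ` essential k Q))"

lemma orbit_names_essential:
  assumes "clopen_quantifier k Q" and "t \<in> essential k Q"
  shows "set t \<subseteq> set (orbit_names k Q a)"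
proof -
  have "finite (\<Union> (set ` essential k Q))" using clopen_essential(1)[OF assms(1)] by simp
  then show ?thesis using assms(2) unfolding orbit_names_def by auto
qed

definition orbit_form :: "nat \<Rightarrow> nat list set set \<Rightarrow> nat list \<Rightarrow> form" where
  "orbit_form k Q a =
     ex_list [length a..<length (orbit_names k Q a)] (orbit_matrix k Q (orbit_names k Q a))"

lemma fv_orbit_form:
  assumes "clopen_quantifier k Q"
  shows "fv (orbit_form k Q a) \<subseteq> {..<length a}"
proof -
  let ?c = "orbit_names k Q a"
  have "fv (orbit_matrix k Q ?c) \<subseteq> {..<length ?c}"
    using fv_eq_type_form[of ?c]
      fv_preserve_form[OF clopen_essential(1)[OF assms] essential_tuples
        orbit_names_essential[OF assms]]
    unfolding orbit_matrix_def by auto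
  then show ?thesis unfolding orbit_form_def fv_ex_list by auto
qed

lemma sat_orbit_form:
  assumes Qc: "clopen_quantifier k Q" and b: "b \<in> tuples (length a)"
  shows "sat k Q (\<lambda>i. if i < length a then b ! i else 0) (orbit_form k Q a) \<longleftrightarrow>
           b \<in> orbit k Q a"
proof -
  let ?c = "orbit_names k Q a" and ?n = "length a"
  let ?\<tau> = "\<lambda>i. if i < ?n then b ! i else 0"
  have c_a: "?c ! u = a ! u" if "u < ?n" for u
    using that unfolding orbit_names_def by (simp add: nth_append)
  have len: "?n \<le> length ?c" unfolding orbit_names_def by simp
  have "sat k Q ?\<tau> (orbit_form k Q a) \<longleftrightarrow>
      (\<exists>\<sigma>. (\<forall>v. v \<notin> {?n..<length ?c} \<longrightarrow> \<sigma> v = ?\<tau> v) \<and>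
          (\<exists>h\<in>Aut k Q. \<forall>u<length ?c. \<sigma> u = h (?c ! u)))"
    unfolding orbit_form_def sat_ex_list
    using sat_orbit_matrix[OF Qc orbit_names_essential[OF Qc]] by simp
  also have "\<dots> \<longleftrightarrow> (\<exists>h\<in>Aut k Q. map h a = b)"
  proof
    assume "\<exists>\<sigma>. (\<forall>v. v \<notin> {?n..<length ?c} \<longrightarrow> \<sigma> v = ?\<tau> v) \<and>
          (\<exists>h\<in>Aut k Q. \<forall>u<length ?c. \<sigma> u = h (?c ! u))"
    then obtain \<sigma> h where \<sigma>: "\<forall>v. v \<notin> {?n..<length ?c} \<longrightarrow> \<sigma> v = ?\<tau> v"
      and h: "h \<in> Aut k Q" "\<forall>u<length ?c. \<sigma> u = h (?c ! u)" by blast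
    have "map h a ! j = b ! j" if "j < ?n" for j
    proof -
      have "b ! j = \<sigma> j" using \<sigma>[rule_format, of j] that by simp
      also have "\<sigma> j = h (a ! j)" using h(2)[rule_format, of j] c_a[OF that] that len by simp
      finally show ?thesis using that by simp
    qed
    then have "map h a = b" using b unfolding tuples_def by (simp add: list_eq_iff_nth_eq)
    with h(1) show "\<exists>h\<in>Aut k Q. map h a = b" by blast
  next
    assume "\<exists>h\<in>Aut k Q. map h a = b"
    then obtain h where h: "h \<in> Aut k Q" "map h a = b" by blast
    define \<sigma> where "\<sigma> u = (if u < length ?c then h (?c ! u) else 0)" for u
    have "\<sigma> v = ?\<tau> v" if "v \<notin> {?n..<length ?c}" for v
      using that h(2) c_a len unfolding \<sigma>_def by auto
    moreover have "\<forall>u<length ?c. \<sigma> u = h (?c ! u)" unfolding \<sigma>_def by simp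
    ultimately show "\<exists>\<sigma>. (\<forall>v. v \<notin> {?n..<length ?c} \<longrightarrow> \<sigma> v = ?\<tau> v) \<and>
          (\<exists>h\<in>Aut k Q. \<forall>u<length ?c. \<sigma> u = h (?c ! u))"
      using h(1) by blast
  qed
  also have "\<dots> \<longleftrightarrow> b \<in> orbit k Q a" unfolding orbit_def by blast
  finally show ?thesis .
qed


theorem proposition18:
  fixes k :: nat and Q :: "nat list set set" and a :: "nat list"
  assumes "is_quantifier k Q" and "clopen_quantifier k Q"
  shows "definable k Q (length a) (orbit k Q a)"
proof -
  have "orbit k Q a \<subseteq> tuples (length a)" unfolding orbit_def tuples_def by auto
  then show ?thesis
    unfolding definable_def
    using fv_orbit_form[OF assms(2)] sat_orbit_form[OF assms(2)] by blast
qed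

end
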